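(* The double Zarankiewicz number satisfies $z_2(m,2)=m+1$ for all $m\ge 2$, $z_2(2,n)=n+1$ for all $n\ge2$, $z_2(3,3)=6$, and $z_2(4,3)\ge 8> z(4,3)$.
   Context: The Zarankiewicz number $z(m,n)$ is the maximum number of edges of a bipartite graph with parts $[m]=\{1,\dots,m\}$ and $[n]$ containing no 4-cycle (equivalently, the maximum size of a set of cells of the $m\times n$ grid containing no four cells $(i,j),(i,l),(k,j),(k,l)$ with $i\ne k$, $j\ne l$). Double Zarankiewicz number: consider configurations $G=([m],[n],E_1\cup E_2)$ where $E_1\subseteq[m]\times[n]$ is a set of 1-edges (cells) and $E_2$ is a set of 2-edges $(i,j;k,l)$ with $i,k\in[m]$, $j,l\in[n]$, $i\ne k$, $j\ne l$; the cells $(i,j)$ and $(k,l)$ are the two halves of this 2-edge. Simplicity condition: the halves of all 2-edges are pairwise distinct cells and none of them belongs to $E_1$. A cell is occupied if it lies in $E_1$ or is a half of some 2-edge. $G$ contains a generalized $C_4$-cycle if (1) there are four 1-edges $(i,j),(i,l),(k,j),(k,l)\in E_1$ with $i\ne k$, $j\ne l$; or (2) there is a 2-edge $(i,j;k,l)\in E_2$ whose two opposite cells $(i,l)$ and $(k,j)$ are both occupied; or (3) there are a 2-edge $(i,j;p,q)\in E_2$ and a cell $(k,l)$ such that the five cells $(k,l),(k,j),(k,q),(i,l),(p,l)$ are pairwise distinct and all occupied. $z_2(m,n)$ is the maximum of $|E_1|+|E_2|$ over all such $G$ satisfying the simplicity condition and containing no generalized $C_4$-cycle. *)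

theory Defs
  imports Main
begin

type_synonym cell = "nat \<times> nat"
type_synonym twoedge = "cell \<times> cell"

definition grid :: "nat \<Rightarrow> nat \<Rightarrow> cell set" where
  "grid m n = {1..m} \<times> {1..n}"

definition has_C4 :: "cell set \<Rightarrow> bool" where
  "has_C4 S \<longleftrightarrow> (\<exists>i j k l. i \<noteq> k \<and> j \<noteq> l \<and>
      (i,j) \<in> S \<and> (i,l) \<in> S \<and> (k,j) \<in> S \<and> (k,l) \<in> S)"

definition zaran :: "nat \<Rightarrow> nat \<Rightarrow> nat" where
  "zaran m n = Max {card E | E. E \<subseteq> grid m n \<and> \<not> has_C4 E}"

definition twoedges_ok :: "nat \<Rightarrow> nat \<Rightarrow> twoedge set \<Rightarrow> bool" where
  "twoedges_ok m n E2 \<longleftrightarrow> (\<forall>((i,j),(k,l)) \<in> E2.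
      (i,j) \<in> grid m n \<and> (k,l) \<in> grid m n \<and> i \<noteq> k \<and> j \<noteq> l)"

definition halves :: "twoedge set \<Rightarrow> cell set" where
  "halves E2 = fst ` E2 \<union> snd ` E2"

definition simple_conf :: "cell set \<Rightarrow> twoedge set \<Rightarrow> bool" where
  "simple_conf E1 E2 \<longleftrightarrow>
     (\<forall>e\<in>E2. \<forall>e'\<in>E2. e \<noteq> e' \<longrightarrow>
        {fst e, snd e} \<inter> {fst e', snd e'} = {}) \<and>
     (\<forall>e\<in>E2. fst e \<noteq> snd e) \<and>
     halves E2 \<inter> E1 = {}"

definition occupied :: "cell set \<Rightarrow> twoedge set \<Rightarrow> cell \<Rightarrow> bool" where
  "occupied E1 E2 c \<longleftrightarrow> c \<in> E1 \<or> c \<in> halves E2"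

definition has_gen_C4 :: "cell set \<Rightarrow> twoedge set \<Rightarrow> bool" where
  "has_gen_C4 E1 E2 \<longleftrightarrow>
     has_C4 E1 \<or>
     (\<exists>i j k l. ((i,j),(k,l)) \<in> E2 \<and> occupied E1 E2 (i,l) \<and> occupied E1 E2 (k,j)) \<or>
     (\<exists>i j p q k l. ((i,j),(p,q)) \<in> E2 \<and>
        distinct [(k,l),(k,j),(k,q),(i,l),(p,l)] \<and>
        occupied E1 E2 (k,l) \<and> occupied E1 E2 (k,j) \<and> occupied E1 E2 (k,q) \<and>
        occupied E1 E2 (i,l) \<and> occupied E1 E2 (p,l))"

definition z2 :: "nat \<Rightarrow> nat \<Rightarrow> nat" where
  "z2 m n = Max {card E1 + card E2 | E1 E2.
      E1 \<subseteq> grid m n \<and> twoedges_ok m n E2 \<and> simple_conf E1 E2 \<and> \<not> has_gen_C4 E1 E2}"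

end

theory Submission
  imports Defs
begin

(* A configuration occupies |E1| + 2|E2| distinct cells, and each 2-edge leaves one of its two
   opposite cells empty.  In a 2 x n grid a full column either lies in E1 (at most one such
   column, since two would form a 4-cycle) or contains a half of a 2-edge, and no 2-edge makes
   both of its columns full; so there are at most |E2| + 1 full columns and
   |E1| + 2|E2| <= n + |E2| + 1.  Transposition gives the m x 2 case.  Two rows of a 4-cycle-free
   set share at most one column, whence z(3,3) = 6 and, since four distinct 2-subsets of a
   3-set do not exist, z(4,3) <= 7.  In the 3 x 3 grid two 2-edges already occupy too many
   cells, and a single 2-edge next to six 1-edges forces E1 to be the grid minus three corners
   of a rectangle, which contains a 4-cycle.  An explicit configuration with seven 1-edges and
   one 2-edge shows z2(4,3) >= 8. *)

definition admissible :: "nat \<Rightarrow> nat \<Rightarrow> cell set \<Rightarrow> twoedge set \<Rightarrow> bool" where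
  "admissible m n E1 E2 \<longleftrightarrow>
     E1 \<subseteq> grid m n \<and> twoedges_ok m n E2 \<and> simple_conf E1 E2 \<and> \<not> has_gen_C4 E1 E2"

lemma finite_grid [simp]: "finite (grid m n)"
  by (simp add: grid_def)

lemma card_grid: "card (grid m n) = m * n"
  by (simp add: grid_def card_cartesian_product)

lemma twoedges_ok_subset: "twoedges_ok m n E2 \<Longrightarrow> E2 \<subseteq> grid m n \<times> grid m n"
  unfolding twoedges_ok_def by fastforce

lemma admissible_finite:
  assumes "admissible m n E1 E2"
  shows "finite E1" "finite E2"
proof -
  show "finite E1"
    using assms finite_subset[OF _ finite_grid] by (auto simp: admissible_def)
  have "E2 \<subseteq> grid m n \<times> grid m n"
    using assms twoedges_ok_subset by (simp add: admissible_def)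
  then show "finite E2"
    by (rule finite_subset) simp
qed

lemma admissible_empty: "admissible m n {} {}"
  by (simp add: admissible_def twoedges_ok_def simple_conf_def has_gen_C4_def has_C4_def)

lemma admissible_no_twoedges: "E1 \<subseteq> grid m n \<Longrightarrow> \<not> has_C4 E1 \<Longrightarrow> admissible m n E1 {}"
  by (simp add: admissible_def twoedges_ok_def simple_conf_def halves_def has_gen_C4_def)

lemma admissible_imp_not_has_C4: "admissible m n E1 E2 \<Longrightarrow> \<not> has_C4 E1"
  by (simp add: admissible_def has_gen_C4_def)

lemma finite_z2_values:
  "finite {card E1 + card E2 | E1 E2.
     E1 \<subseteq> grid m n \<and> twoedges_ok m n E2 \<and> simple_conf E1 E2 \<and> \<not> has_gen_C4 E1 E2}"
proof (rule finite_subset)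
  show "{card E1 + card E2 | E1 E2.
          E1 \<subseteq> grid m n \<and> twoedges_ok m n E2 \<and> simple_conf E1 E2 \<and> \<not> has_gen_C4 E1 E2}
        \<subseteq> (\<lambda>(E1, E2). card E1 + card E2) ` (Pow (grid m n) \<times> Pow (grid m n \<times> grid m n))"
    using twoedges_ok_subset by fastforce
qed simp

lemma admissible_card_le_z2: "admissible m n E1 E2 \<Longrightarrow> card E1 + card E2 \<le> z2 m n"
  unfolding z2_def admissible_def by (rule Max_ge[OF finite_z2_values]) blast

lemma z2_le:
  assumes "\<And>E1 E2. admissible m n E1 E2 \<Longrightarrow> card E1 + card E2 \<le> v"
  shows "z2 m n \<le> v"
  unfolding z2_def
proof (rule Max.boundedI[OF finite_z2_values])
  show "{card E1 + card E2 | E1 E2.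
          E1 \<subseteq> grid m n \<and> twoedges_ok m n E2 \<and> simple_conf E1 E2 \<and> \<not> has_gen_C4 E1 E2} \<noteq> {}"
    using admissible_empty[of m n] unfolding admissible_def by blast
qed (use assms in \<open>auto simp: admissible_def\<close>)

lemma zaran_le:
  assumes "\<And>E. E \<subseteq> grid m n \<Longrightarrow> \<not> has_C4 E \<Longrightarrow> card E \<le> v"
  shows "zaran m n \<le> v"
  unfolding zaran_def
proof (rule Max.boundedI)
  show "finite {card E | E. E \<subseteq> grid m n \<and> \<not> has_C4 E}"
    by (rule finite_subset[of _ "card ` Pow (grid m n)"]) auto
  show "{card E | E. E \<subseteq> grid m n \<and> \<not> has_C4 E} \<noteq> {}"
    using has_C4_def by blast
qed (use assms in blast)

lemma card_halves:
  assumes "simple_conf E1 E2" "finite E2"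
  shows "card (halves E2) = 2 * card E2"
proof -
  have disjoint: "e \<in> E2 \<Longrightarrow> e' \<in> E2 \<Longrightarrow> e \<noteq> e' \<Longrightarrow> {fst e, snd e} \<inter> {fst e', snd e'} = {}"
    and proper: "e \<in> E2 \<Longrightarrow> fst e \<noteq> snd e" for e e'
    using assms(1) unfolding simple_conf_def by blast+
  have "inj_on fst E2" "inj_on snd E2"
    by (auto intro!: inj_onI dest: disjoint)
  moreover have "fst ` E2 \<inter> snd ` E2 = {}"
    using disjoint proper by (fastforce simp: disjoint_iff)
  ultimately show ?thesis
    using assms(2) by (simp add: halves_def card_Un_disjoint card_image)
qed

lemma halves_singleton [simp]: "halves {(a, b)} = {a, b}"
  by (auto simp: halves_def)

lemma card_occupied:
  assumes "admissible m n E1 E2"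
  shows "card (E1 \<union> halves E2) = card E1 + 2 * card E2"
proof -
  have "simple_conf E1 E2"
    using assms by (simp add: admissible_def)
  then have "E1 \<inter> halves E2 = {}" "card (halves E2) = 2 * card E2"
    using card_halves admissible_finite[OF assms] by (auto simp: simple_conf_def)
  moreover have "finite (halves E2)"
    using admissible_finite[OF assms] by (simp add: halves_def)
  ultimately show ?thesis
    using admissible_finite[OF assms] by (simp add: card_Un_disjoint)
qed

lemma occupied_subset_grid: "admissible m n E1 E2 \<Longrightarrow> E1 \<union> halves E2 \<subseteq> grid m n"
  using twoedges_ok_subset by (fastforce simp: admissible_def halves_def)

lemma admissible_opposite_unoccupied:
  assumes "admissible m n E1 E2" "((i, j), (k, l)) \<in> E2"
  shows "\<not> (occupied E1 E2 (i, l) \<and> occupied E1 E2 (k, j))"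
  using assms by (auto simp: admissible_def has_gen_C4_def)

lemma admissible_opposite_cell_free:
  assumes adm: "admissible m n E1 E2" and e: "((i, j), (k, l)) \<in> E2"
  obtains u where "u = (i, l) \<or> u = (k, j)" "u \<in> grid m n - (E1 \<union> halves E2)"
proof -
  have "(i, j) \<in> grid m n" "(k, l) \<in> grid m n"
    using adm e by (auto simp: admissible_def twoedges_ok_def)
  then have "(i, l) \<in> grid m n" "(k, j) \<in> grid m n"
    by (auto simp: grid_def)
  then show ?thesis
    using that admissible_opposite_unoccupied[OF adm e] by (auto simp: occupied_def)
qed

lemma admissible_card_occupied_lt:
  assumes adm: "admissible m n E1 E2" and "E2 \<noteq> {}"
  shows "card E1 + 2 * card E2 < m * n"
proof -
  obtain i j k l where e: "((i, j), (k, l)) \<in> E2"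
    using \<open>E2 \<noteq> {}\<close> by (metis all_not_in_conv prod.collapse)
  obtain u where "u \<in> grid m n - (E1 \<union> halves E2)"
    using admissible_opposite_cell_free[OF adm e] by blast
  then have "E1 \<union> halves E2 \<subset> grid m n"
    using occupied_subset_grid[OF adm] by blast
  then have "card (E1 \<union> halves E2) < card (grid m n)"
    by (rule psubset_card_mono[OF finite_grid])
  then show ?thesis
    by (simp add: card_occupied[OF adm] card_grid)
qed

abbreviation transpose_edges :: "twoedge set \<Rightarrow> twoedge set" where
  "transpose_edges E2 \<equiv> map_prod prod.swap prod.swap ` E2"

lemma pair_in_transpose_edges:
  "((b, a), (d, c)) \<in> transpose_edges E2 \<longleftrightarrow> ((a, b), (c, d)) \<in> E2"
  by force

lemma halves_transpose_edges: "halves (transpose_edges E2) = prod.swap ` halves E2"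
  by (simp add: halves_def image_Un image_image)

lemma occupied_transpose:
  "occupied (prod.swap ` E1) (transpose_edges E2) (b, a) \<longleftrightarrow> occupied E1 E2 (a, b)"
  by (simp add: occupied_def halves_transpose_edges pair_in_swap_image)

lemma has_C4_transpose: "has_C4 (prod.swap ` E) \<longleftrightarrow> has_C4 E"
  unfolding has_C4_def by (auto simp: pair_in_swap_image)

lemma distinct_cross_cells:
  "distinct [(k, l), (k, j), (k, q), (i, l), (p, l)] \<longleftrightarrow>
     k \<noteq> i \<and> k \<noteq> p \<and> i \<noteq> p \<and> l \<noteq> j \<and> l \<noteq> q \<and> j \<noteq> q"
  by auto

lemma has_gen_C4_transpose:
  "has_gen_C4 (prod.swap ` E1) (transpose_edges E2) \<longleftrightarrow> has_gen_C4 E1 E2"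
  unfolding has_gen_C4_def has_C4_transpose
  by (simp only: pair_in_transpose_edges occupied_transpose distinct_cross_cells) blast

lemma simple_conf_transpose:
  assumes "simple_conf E1 E2"
  shows "simple_conf (prod.swap ` E1) (transpose_edges E2)"
  unfolding simple_conf_def
proof (intro conjI ballI impI)
  fix e e' assume "e \<in> transpose_edges E2" "e' \<in> transpose_edges E2" "e \<noteq> e'"
  then obtain d d' where d: "d \<in> E2" "d' \<in> E2"
    and e: "e = map_prod prod.swap prod.swap d" and e': "e' = map_prod prod.swap prod.swap d'"
    by (elim imageE)
  with \<open>e \<noteq> e'\<close> have "d \<noteq> d'"
    by blast
  with d have "{fst d, snd d} \<inter> {fst d', snd d'} = {}"
    using assms unfolding simple_conf_def by blast
  then show "{fst e, snd e} \<inter> {fst e', snd e'} = {}"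
    unfolding e e' using image_Int[OF inj_swap, of "{fst d, snd d}" "{fst d', snd d'}"] by simp
next
  fix e assume "e \<in> transpose_edges E2"
  then obtain d where "d \<in> E2" and e: "e = map_prod prod.swap prod.swap d"
    by (elim imageE)
  then have "fst d \<noteq> snd d"
    using assms unfolding simple_conf_def by blast
  then show "fst e \<noteq> snd e"
    unfolding e by (simp add: inj_eq[OF inj_swap])
next
  show "halves (transpose_edges E2) \<inter> prod.swap ` E1 = {}"
    using assms unfolding simple_conf_def halves_transpose_edges
    by (simp add: image_Int[OF inj_swap, symmetric])
qed

lemma admissible_transpose:
  assumes "admissible m n E1 E2"
  shows "admissible n m (prod.swap ` E1) (transpose_edges E2)"
  using assms simple_conf_transpose
  by (auto simp: admissible_def has_gen_C4_transpose grid_def twoedges_ok_def)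

lemma z2_commute: "z2 m n = z2 n m"
proof -
  have "z2 m n \<le> z2 n m" for m n
  proof (rule z2_le)
    fix E1 E2 assume "admissible m n E1 E2"
    then have "card (prod.swap ` E1) + card (transpose_edges E2) \<le> z2 n m"
      by (rule admissible_card_le_z2[OF admissible_transpose])
    then show "card E1 + card E2 \<le> z2 n m"
      by (simp add: card_image inj_on_def prod_eq_iff)
  qed
  then show ?thesis
    by (metis le_antisym)
qed

lemma card_row_Int_le_1:
  assumes "\<not> has_C4 E" "r \<noteq> s"
  shows "card (E `` {r} \<inter> E `` {s}) \<le> 1"
proof (cases "finite (E `` {r} \<inter> E `` {s})")
  case True
  have "a = b" if "a \<in> E `` {r} \<inter> E `` {s}" "b \<in> E `` {r} \<inter> E `` {s}" for a b
    using that assms unfolding has_C4_def by blast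
  with True show ?thesis
    by (simp add: card_le_Suc0_iff_eq)
qed simp

lemma row_subset_columns: "E \<subseteq> grid m n \<Longrightarrow> E `` {r} \<subseteq> {1..n}"
  by (auto simp: grid_def)

lemma card_two_rows_le:
  assumes "E \<subseteq> grid m n"
  shows "card (E `` {r}) + card (E `` {s}) \<le> n + card (E `` {r} \<inter> E `` {s})"
proof -
  have finite: "finite (E `` {r})" "finite (E `` {s})"
    using row_subset_columns[OF assms] by (auto intro: finite_subset)
  have "card (E `` {r} \<union> E `` {s}) \<le> card {1..n}"
    using row_subset_columns[OF assms] by (intro card_mono) auto
  then show ?thesis
    using card_Un_Int[OF finite] by simp
qed

lemma card_two_rows_le_C4_free:
  "E \<subseteq> grid m n \<Longrightarrow> \<not> has_C4 E \<Longrightarrow> r \<noteq> s \<Longrightarrow> card (E `` {r}) + card (E `` {s}) \<le> n + 1"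
  using card_two_rows_le[of E m n r s] card_row_Int_le_1[of E r s] by linarith

lemma card_eq_sum_rows:
  assumes "E \<subseteq> grid m n"
  shows "card E = (\<Sum>r = 1..m. card (E `` {r}))"
proof -
  have "E = Sigma {1..m} (\<lambda>r. E `` {r})"
    using assms by (auto simp: grid_def)
  moreover have "finite (E `` {r})" for r
    using row_subset_columns[OF assms] by (auto intro: finite_subset)
  ultimately show ?thesis
    by (metis card_SigmaI finite_atLeastAtMost)
qed

lemma card_eq_sum_two_rows: "E \<subseteq> grid 2 n \<Longrightarrow> card E = card (E `` {1}) + card (E `` {2})"
  by (simp add: card_eq_sum_rows numeral_2_eq_2)

lemma admissible_2_n_twoedge_column_not_full:
  assumes adm: "admissible 2 n E1 E2" and e: "((i, j), (k, l)) \<in> E2"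
  defines "F \<equiv> (E1 \<union> halves E2) `` {1} \<inter> (E1 \<union> halves E2) `` {2}"
  shows "j \<notin> F \<or> l \<notin> F"
proof -
  have "(i, j) \<in> grid 2 n" "(k, l) \<in> grid 2 n" "i \<noteq> k"
    using adm e unfolding admissible_def twoedges_ok_def by auto
  then have "{i, k} = {1, 2}"
    by (auto simp: grid_def)
  then show ?thesis
    using admissible_opposite_unoccupied[OF adm e]
    by (auto simp: F_def occupied_def doubleton_eq_iff)
qed

lemma admissible_2_n_full_columns_card_le:
  assumes adm: "admissible 2 n E1 E2"
  defines "F \<equiv> (E1 \<union> halves E2) `` {1} \<inter> (E1 \<union> halves E2) `` {2}"
  shows "card F \<le> 1 + card E2"
proof -
  define cols where "cols e = F \<inter> {snd (fst e), snd (snd e)}" for e :: twoedge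
  have "F \<subseteq> (E1 `` {1} \<inter> E1 `` {2}) \<union> (\<Union>e\<in>E2. cols e)"
    by (fastforce simp: F_def cols_def halves_def)
  moreover have "finite (E1 `` {1} \<inter> E1 `` {2})" "finite (\<Union>e\<in>E2. cols e)"
    using admissible_finite[OF adm] by (auto simp: cols_def)
  ultimately have "card F \<le> card ((E1 `` {1} \<inter> E1 `` {2}) \<union> (\<Union>e\<in>E2. cols e))"
    by (intro card_mono) auto
  also have "\<dots> \<le> card (E1 `` {1} \<inter> E1 `` {2}) + card (\<Union>e\<in>E2. cols e)"
    by (rule card_Un_le)
  also have "\<dots> \<le> 1 + (\<Sum>e\<in>E2. card (cols e))"
    using card_row_Int_le_1[OF admissible_imp_not_has_C4[OF adm], of 1 2]
      card_UN_le[OF admissible_finite(2)[OF adm], of cols]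
    by simp
  also have "\<dots> \<le> 1 + card E2"
  proof -
    have "card (cols e) \<le> 1" if e_in: "e \<in> E2" for e
    proof -
      obtain i j k l where e: "e = ((i, j), (k, l))"
        by (metis prod.collapse)
      then obtain x where "cols e \<subseteq> {x}"
        using admissible_2_n_twoedge_column_not_full[OF adm e_in[unfolded e]]
        by (auto simp: cols_def F_def)
      then show ?thesis
        using card_mono[of "{x}" "cols e"] by simp
    qed
    then show ?thesis
      using sum_bounded_above[of E2 "\<lambda>e. card (cols e)" 1] by simp
  qed
  finally show ?thesis .
qed

lemma admissible_2_n_card_le:
  assumes adm: "admissible 2 n E1 E2"
  shows "card E1 + card E2 \<le> n + 1"
proof -
  define Occ where "Occ = E1 \<union> halves E2"
  have Occ_grid: "Occ \<subseteq> grid 2 n"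
    unfolding Occ_def by (rule occupied_subset_grid[OF adm])
  have "card E1 + 2 * card E2 \<le> n + card (Occ `` {1} \<inter> Occ `` {2})"
    using card_occupied[OF adm] card_eq_sum_two_rows[OF Occ_grid] card_two_rows_le[OF Occ_grid, of 1 2]
    by (simp add: Occ_def)
  then show ?thesis
    using admissible_2_n_full_columns_card_le[OF adm] by (simp add: Occ_def)
qed

lemma z2_2_n_ge:
  assumes "n \<ge> 1"
  shows "n + 1 \<le> z2 2 n"
proof -
  define E1 :: "cell set" where "E1 = insert (2, 1) ({1} \<times> {1..n})"
  have "E1 \<subseteq> grid 2 n"
    using assms by (auto simp: E1_def grid_def)
  moreover have "\<not> has_C4 E1"
    by (auto simp: has_C4_def E1_def)
  ultimately have "admissible 2 n E1 {}"
    by (rule admissible_no_twoedges)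
  then have "card E1 \<le> z2 2 n"
    using admissible_card_le_z2 by fastforce
  moreover have "card E1 = n + 1"
    by (simp add: E1_def)
  ultimately show ?thesis
    by simp
qed

lemma z2_2_n: "n \<ge> 1 \<Longrightarrow> z2 2 n = n + 1"
  using z2_2_n_ge z2_le[OF admissible_2_n_card_le] by (simp add: le_antisym)

lemma C4_free_3_3_card_le:
  assumes "E \<subseteq> grid 3 3" "\<not> has_C4 E"
  shows "card E \<le> 6"
proof -
  have rows3: "{1..3::nat} = {1, 2, 3}"
    by auto
  have "card E = card (E `` {1}) + card (E `` {2}) + card (E `` {3})"
    unfolding card_eq_sum_rows[OF assms(1)] rows3 by simp
  then show ?thesis
    using card_two_rows_le_C4_free[OF assms, of 1 2] card_two_rows_le_C4_free[OF assms, of 1 3]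
      card_two_rows_le_C4_free[OF assms, of 2 3]
    by simp
qed

lemma has_C4_3_3_minus_corners:
  assumes "grid 3 3 - {(i, j), (k, l), (i, l)} \<subseteq> E" "i \<noteq> k" "j \<noteq> l" "k \<in> {1..3}" "j \<in> {1..3}"
  shows "has_C4 E"
proof -
  have "\<exists>x::nat. 1 \<le> x \<and> x \<le> 3 \<and> x \<noteq> a \<and> x \<noteq> b" for a b
    by presburger
  then obtain r c :: nat where "r \<in> {1..3}" "r \<noteq> i" "r \<noteq> k" "c \<in> {1..3}" "c \<noteq> j" "c \<noteq> l"
    by (metis atLeastAtMost_iff)
  with assms have "(k, j) \<in> E" "(k, c) \<in> E" "(r, j) \<in> E" "(r, c) \<in> E"
    by (auto simp: grid_def)
  with \<open>r \<noteq> k\<close> \<open>c \<noteq> j\<close> show ?thesis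
    unfolding has_C4_def by blast
qed

lemma admissible_3_3_single_twoedge_card_le:
  assumes adm: "admissible 3 3 E1 {((i, j), (k, l))}"
  shows "card E1 \<le> 5"
proof (rule ccontr)
  assume "\<not> card E1 \<le> 5"
  moreover have "card E1 \<le> 6"
    using adm admissible_imp_not_has_C4[OF adm] by (intro C4_free_3_3_card_le) (simp_all add: admissible_def)
  ultimately have "card E1 = 6"
    by simp
  have ij: "(i, j) \<in> grid 3 3" and kl: "(k, l) \<in> grid 3 3" and "i \<noteq> k" "j \<noteq> l"
    using adm by (auto simp: admissible_def twoedges_ok_def)
  obtain u where u: "u = (i, l) \<or> u = (k, j)" "u \<in> grid 3 3 - (E1 \<union> {(i, j), (k, l)})"
    using admissible_opposite_cell_free[OF adm singletonI] by auto
  have "E1 \<union> {(i, j), (k, l)} \<subseteq> grid 3 3 - {u}"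
    using occupied_subset_grid[OF adm] u(2) by auto
  moreover have "card (E1 \<union> {(i, j), (k, l)}) = card (grid 3 3 - {u})"
    using card_occupied[OF adm] \<open>card E1 = 6\<close> u(2) by (simp add: card_grid)
  ultimately have "E1 \<union> {(i, j), (k, l)} = grid 3 3 - {u}"
    using card_subset_eq[of "grid 3 3 - {u}" "E1 \<union> {(i, j), (k, l)}"] by simp
  then have "grid 3 3 - {(i, j), (k, l), u} \<subseteq> E1"
    by blast
  moreover have "j \<in> {1..3}" "k \<in> {1..3}" "i \<in> {1..3}" "l \<in> {1..3}"
    using ij kl by (auto simp: grid_def)
  ultimately have "has_C4 E1"
    using u(1) \<open>i \<noteq> k\<close> \<open>j \<noteq> l\<close> has_C4_3_3_minus_corners[of i j k l E1]
      has_C4_3_3_minus_corners[of k l i j E1]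
    by (auto simp: insert_commute)
  then show False
    using admissible_imp_not_has_C4[OF adm] by simp
qed

lemma admissible_3_3_card_le:
  assumes adm: "admissible 3 3 E1 E2"
  shows "card E1 + card E2 \<le> 6"
proof -
  consider "E2 = {}" | "card E2 = 1" | "card E2 \<ge> 2"
    using admissible_finite(2)[OF adm] card_0_eq by force
  then show ?thesis
  proof cases
    case 1
    then show ?thesis
      using adm admissible_imp_not_has_C4[OF adm] C4_free_3_3_card_le by (simp add: admissible_def)
  next
    case 2
    then obtain i j k l where "E2 = {((i, j), (k, l))}"
      by (metis card_1_singletonE prod.collapse)
    with 2 show ?thesis
      using admissible_3_3_single_twoedge_card_le adm by fastforce
  next
    case 3
    then show ?thesis
      using admissible_card_occupied_lt[OF adm] by fastforce
  qed
qed

lemma z2_3_3_ge: "6 \<le> z2 3 3"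
proof -
  define E1 :: "cell set" where "E1 = grid 3 3 - (\<lambda>a. (a, a)) ` {1..3}"
  have "(a, b) \<in> E1 \<longleftrightarrow> a \<in> {1..3} \<and> b \<in> {1..3} \<and> a \<noteq> b" for a b
    by (auto simp: E1_def grid_def)
  then have "\<not> has_C4 E1"
    unfolding has_C4_def by auto
  then have "admissible 3 3 E1 {}"
    by (intro admissible_no_twoedges) (simp add: E1_def)
  then have "card E1 \<le> z2 3 3"
    using admissible_card_le_z2 by fastforce
  moreover have "card E1 = 6"
    unfolding E1_def by (subst card_Diff_subset) (auto simp: card_grid card_image inj_on_def grid_def)
  ultimately show ?thesis
    by simp
qed

lemma C4_free_4_3_card_le:
  assumes E: "E \<subseteq> grid 4 3" and C4_free: "\<not> has_C4 E"
  shows "card E \<le> 7"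
proof (rule ccontr)
  define row where "row r = E `` {r}" for r
  have rows4: "{1..4::nat} = {1, 2, 3, 4}"
    by auto
  have pair: "card (row r) + card (row s) \<le> 4" if "r \<noteq> s" for r s
    using card_two_rows_le_C4_free[OF E C4_free that] by (simp add: row_def)
  assume "\<not> card E \<le> 7"
  then have "card (row 1) + card (row 2) + card (row 3) + card (row 4) \<ge> 8"
    unfolding card_eq_sum_rows[OF E] rows4 row_def by simp
  moreover have "card (row 1) + card (row 2) \<le> 4" "card (row 3) + card (row 4) \<le> 4"
    "card (row 1) + card (row 3) \<le> 4" "card (row 2) + card (row 4) \<le> 4"
    "card (row 1) + card (row 4) \<le> 4" "card (row 2) + card (row 3) \<le> 4"
    by (simp_all add: pair)
  ultimately have "card (row 1) = 2 \<and> card (row 2) = 2 \<and> card (row 3) = 2 \<and> card (row 4) = 2"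
    by linarith
  then have row_card: "card (row r) = 2" if "r \<in> {1..4}" for r
    using that unfolding rows4 by auto
  have "inj_on row {1..4}"
  proof (rule inj_onI, rule ccontr)
    fix r s assume "r \<in> {1..4}" "s \<in> {1..4}" "row r = row s" "r \<noteq> s"
    then show False
      using card_row_Int_le_1[OF C4_free \<open>r \<noteq> s\<close>] row_card by (simp add: row_def)
  qed
  moreover have "row ` {1..4} \<subseteq> {B. B \<subseteq> {1..3} \<and> card B = 2}"
    using row_subset_columns[OF E] row_card by (auto simp: row_def)
  ultimately have "card {1..4::nat} \<le> card {B. B \<subseteq> {1..3::nat} \<and> card B = 2}"
    by (intro card_inj_on_le) auto
  then show False
    by (simp add: n_subsets numeral_eq_Suc)
qed

lemma zaran_4_3_le: "zaran 4 3 \<le> 7"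
  by (rule zaran_le) (rule C4_free_4_3_card_le)

lemma z2_4_3_ge: "8 \<le> z2 4 3"
proof -
  define E1 :: "cell set" where "E1 = {(1, 2), (1, 3), (2, 1), (2, 3), (3, 1), (3, 2), (4, 2)}"
  define E2 :: "twoedge set" where "E2 = {((3, 3), (4, 1))}"
  have occupied: "occupied E1 E2 c \<longleftrightarrow>
      c \<in> {(1, 2), (1, 3), (2, 1), (2, 3), (3, 1), (3, 2), (4, 2), (3, 3), (4, 1)}" for c
    by (auto simp: occupied_def E1_def E2_def)
  have "\<not> has_C4 E1"
  proof
    assume "has_C4 E1"
    then obtain i j k l where "i \<noteq> k" "j \<noteq> l"
      and cells: "(i, j) \<in> E1" "(i, l) \<in> E1" "(k, j) \<in> E1" "(k, l) \<in> E1"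
      unfolding has_C4_def by blast
    have E1_mem: "(a, b) \<in> E1 \<Longrightarrow> 1 \<le> a \<and> a \<le> 3 \<and> 1 \<le> b \<and> b \<le> 3 \<and> a \<noteq> b \<or> a = 4 \<and> b = 2" for a b
      by (auto simp: E1_def)
    have "i \<noteq> 4" "k \<noteq> 4"
      using E1_mem[OF cells(1)] E1_mem[OF cells(2)] E1_mem[OF cells(3)] E1_mem[OF cells(4)] \<open>j \<noteq> l\<close>
      by auto
    with cells \<open>i \<noteq> k\<close> \<open>j \<noteq> l\<close> show False
      using E1_mem[OF cells(1)] E1_mem[OF cells(2)] E1_mem[OF cells(3)] E1_mem[OF cells(4)] by linarith
  qed
  moreover have "\<not> (\<exists>i j k l. ((i, j), (k, l)) \<in> E2 \<and> occupied E1 E2 (i, l) \<and> occupied E1 E2 (k, j))"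
    unfolding occupied by (simp add: E2_def)
  moreover have "\<not> (\<exists>i j p q k l. ((i, j), (p, q)) \<in> E2 \<and> distinct [(k, l), (k, j), (k, q), (i, l), (p, l)] \<and>
      occupied E1 E2 (k, l) \<and> occupied E1 E2 (k, j) \<and> occupied E1 E2 (k, q) \<and>
      occupied E1 E2 (i, l) \<and> occupied E1 E2 (p, l))"
    unfolding occupied by (auto simp: E2_def distinct_cross_cells)
  ultimately have "admissible 4 3 E1 E2"
    by (auto simp: admissible_def has_gen_C4_def grid_def twoedges_ok_def simple_conf_def E1_def E2_def)
  then have "card E1 + card E2 \<le> z2 4 3"
    by (rule admissible_card_le_z2)
  then show ?thesis
    by (simp add: E1_def E2_def)
qed

theorem theorem2p3:
  shows "(\<forall>m::nat. m \<ge> 2 \<longrightarrow> z2 m 2 = m + 1) \<and>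
         (\<forall>n::nat. n \<ge> 2 \<longrightarrow> z2 2 n = n + 1) \<and>
         z2 3 3 = 6 \<and>
         z2 4 3 \<ge> 8 \<and> 8 > zaran 4 3"
proof (intro conjI allI impI)
  fix m :: nat
  assume "m \<ge> 2"
  then show "z2 m 2 = m + 1"
    using z2_2_n[of m] z2_commute[of m 2] by simp
next
  fix n :: nat
  assume "n \<ge> 2"
  then show "z2 2 n = n + 1"
    by (simp add: z2_2_n)
next
  show "z2 3 3 = 6"
    using z2_le[OF admissible_3_3_card_le] z2_3_3_ge by (simp add: le_antisym)
next
  show "z2 4 3 \<ge> 8"
    by (rule z2_4_3_ge)
next
  show "8 > zaran 4 3"
    using zaran_4_3_le by simp
qed

end
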